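(* Let $c^0\in\mathcal{C}$ and $s^0\in\mathcal{S}$ be an incompatible pair, $(c^0,s^0)\notin\mathcal{E}$. Then there exist an integer $h$ with $1\le h\le\min\{I,J\}-1$ and types $c^1,\ldots,c^h\in\mathcal{C}$, $s^1,\ldots,s^h\in\mathcal{S}$ with $(c^i,s^i)\in\mathcal{E}$ for $i=1,\ldots,h$, such that the FCFS matching of the customer sequence $(c^0,c^1,\ldots,c^h)$ with the server sequence $(s^0,s^1,\ldots,s^h)$ is perfect.
   Context: Let $\mathcal{C}=\{c_1,\ldots,c_I\}$ (customer types) and $\mathcal{S}=\{s_1,\ldots,s_J\}$ (server types) be finite sets and $G=(\mathcal{C},\mathcal{S},\mathcal{E})$, $\mathcal{E}\subseteq\mathcal{C}\times\mathcal{S}$, a connected bipartite compatibility graph. Given finite ordered sequences of customer types and server types indexed by the same set, the FCFS matching is the unique complete FCFS matching: a set $A$ of index pairs $(m,n)$ with $(c^m,s^n)\in\mathcal{E}$, each index in at most one pair, with no unmatched compatible pair left, and such that for every $(m,n)\in A$ every $l<n$ with $(c^m,s^l)\in\mathcal{E}$ is matched to some $k<m$ and every $k<m$ with $(c^k,s^n)\in\mathcal{E}$ is matched to some $l<n$. It is perfect if every index is matched. *)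

theory Defs
  imports Main
begin

definition bip_adj :: "('c \<times> 's) set \<Rightarrow> (('c + 's) \<times> ('c + 's)) set" where
  "bip_adj E = {(Inl c, Inr s) | c s. (c, s) \<in> E} \<union> {(Inr s, Inl c) | c s. (c, s) \<in> E}"

definition connected_bipartite :: "'c set \<Rightarrow> 's set \<Rightarrow> ('c \<times> 's) set \<Rightarrow> bool" where
  "connected_bipartite C S E \<longleftrightarrow>
     E \<subseteq> C \<times> S \<and>
     (\<forall>u \<in> C <+> S. \<forall>v \<in> C <+> S. (u, v) \<in> (bip_adj E)\<^sup>*)"

text \<open>Complete FCFS matching of the customer sequence cs 0, ..., cs (n-1) with the
  server sequence ss 0, ..., ss (n-1): a set A of index pairs (m,k) (customer m
  matched with server k).\<close>

definition complete_fcfs_matching ::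
  "('c \<times> 's) set \<Rightarrow> nat \<Rightarrow> (nat \<Rightarrow> 'c) \<Rightarrow> (nat \<Rightarrow> 's) \<Rightarrow> (nat \<times> nat) set \<Rightarrow> bool" where
  "complete_fcfs_matching E n cs ss A \<longleftrightarrow>
     A \<subseteq> {..<n} \<times> {..<n} \<and>
     (\<forall>(m, k) \<in> A. (cs m, ss k) \<in> E) \<and>
     (\<forall>m k k'. (m, k) \<in> A \<longrightarrow> (m, k') \<in> A \<longrightarrow> k = k') \<and>
     (\<forall>m m' k. (m, k) \<in> A \<longrightarrow> (m', k) \<in> A \<longrightarrow> m = m') \<and>
     (\<forall>m < n. \<forall>k < n. (cs m, ss k) \<in> E \<longrightarrow> (\<exists>k'. (m, k') \<in> A) \<or> (\<exists>m'. (m', k) \<in> A)) \<and>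
     (\<forall>(m, k) \<in> A.
        (\<forall>l < k. (cs m, ss l) \<in> E \<longrightarrow> (\<exists>i < m. (i, l) \<in> A)) \<and>
        (\<forall>i < m. (cs i, ss k) \<in> E \<longrightarrow> (\<exists>l < k. (i, l) \<in> A)))"

definition perfect_matching :: "nat \<Rightarrow> (nat \<times> nat) set \<Rightarrow> bool" where
  "perfect_matching n A \<longleftrightarrow>
     (\<forall>m < n. \<exists>k. (m, k) \<in> A) \<and> (\<forall>k < n. \<exists>m. (m, k) \<in> A)"

text \<open>"The FCFS matching is perfect": a complete FCFS matching exists, and every
  complete FCFS matching (it is unique) is perfect.\<close>

definition fcfs_perfect :: "('c \<times> 's) set \<Rightarrow> nat \<Rightarrow> (nat \<Rightarrow> 'c) \<Rightarrow> (nat \<Rightarrow> 's) \<Rightarrow> bool" where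
  "fcfs_perfect E n cs ss \<longleftrightarrow>
     (\<exists>A. complete_fcfs_matching E n cs ss A) \<and>
     (\<forall>A. complete_fcfs_matching E n cs ss A \<longrightarrow> perfect_matching n A)"

end

theory Submission
  imports Defs
begin

text \<open>Follow a path in G from c0 to s0; it closes up, via the edge (c^h, s^0), to an alternating
  cycle c^0 s^1 c^1 s^2 ... c^h s^0 with (c^i, s^{i+1}) and (c^i, s^i) (i \<ge> 1) compatible.
  Take such a cycle of minimal length h. Any further compatible pair (c^m, s^k) would be a
  chord allowing a shorter cycle, so the cycle is chordless; in particular its types are
  distinct, giving h \<le> min I J - 1. On the sequences (c^0..c^h) and (s^0..s^h) the only
  compatible pairs are then the cycle edges, and FCFS is forced to match c^i with s^{i+1}
  and c^h with s^0, a perfect matching.\<close>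

definition alternating_walk :: "('c \<times> 's) set \<Rightarrow> nat \<Rightarrow> (nat \<Rightarrow> 'c) \<Rightarrow> (nat \<Rightarrow> 's) \<Rightarrow> bool" where
  "alternating_walk E h cs ss \<longleftrightarrow>
     (\<forall>i<h. (cs i, ss (Suc i)) \<in> E) \<and> (\<forall>i\<in>{1..h}. (cs i, ss i) \<in> E)"

definition alternating_cycle :: "('c \<times> 's) set \<Rightarrow> nat \<Rightarrow> (nat \<Rightarrow> 'c) \<Rightarrow> (nat \<Rightarrow> 's) \<Rightarrow> bool" where
  "alternating_cycle E h cs ss \<longleftrightarrow> alternating_walk E h cs ss \<and> (cs h, ss 0) \<in> E"

definition chordless_cycle :: "('c \<times> 's) set \<Rightarrow> nat \<Rightarrow> (nat \<Rightarrow> 'c) \<Rightarrow> (nat \<Rightarrow> 's) \<Rightarrow> bool" where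
  "chordless_cycle E h cs ss \<longleftrightarrow>
     (\<forall>m\<le>h. \<forall>k\<le>h. (cs m, ss k) \<in> E \<longrightarrow> k = Suc m \<or> (k = m \<and> 1 \<le> m) \<or> (k = 0 \<and> m = h))"

definition cycle_matching :: "nat \<Rightarrow> (nat \<times> nat) set" where
  "cycle_matching h = {(i, Suc i) | i. i < h} \<union> {(h, 0)}"

lemma chordless_cycleD:
  assumes "chordless_cycle E h cs ss" "m \<le> h" "k \<le> h" "(cs m, ss k) \<in> E"
  shows "k = Suc m \<or> (k = m \<and> 1 \<le> m) \<or> (k = 0 \<and> m = h)"
  using assms by (simp add: chordless_cycle_def)

lemma alternating_cycleD:
  assumes "alternating_cycle E h cs ss"
  shows "\<And>i. i < h \<Longrightarrow> (cs i, ss (Suc i)) \<in> E"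
    and "\<And>i. 1 \<le> i \<Longrightarrow> i \<le> h \<Longrightarrow> (cs i, ss i) \<in> E"
    and "(cs h, ss 0) \<in> E"
  using assms by (auto simp: alternating_cycle_def alternating_walk_def)

lemma alternating_walk_snoc:
  assumes "alternating_walk E h cs ss" "(cs h, s) \<in> E" "(c, s) \<in> E"
  shows "alternating_walk E (Suc h) (cs(Suc h := c)) (ss(Suc h := s))"
  using assms unfolding alternating_walk_def
  by (auto simp: less_Suc_eq le_Suc_eq)

lemma alternating_walk_from_rtrancl:
  assumes "(Inl c0, v) \<in> (bip_adj E)\<^sup>*"
  shows "(\<forall>c. v = Inl c \<longrightarrow> (\<exists>h cs ss. cs 0 = c0 \<and> alternating_walk E h cs ss \<and> cs h = c)) \<and>
         (\<forall>s. v = Inr s \<longrightarrow> (\<exists>h cs ss. cs 0 = c0 \<and> alternating_walk E h cs ss \<and> (cs h, s) \<in> E))"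
  using assms
proof (induction rule: rtrancl_induct)
  case base
  have "alternating_walk E 0 (\<lambda>_. c0) ss" for ss by (simp add: alternating_walk_def)
  then show ?case by fastforce
next
  case (step u v)
  from step(2) consider c s where "u = Inl c" "v = Inr s" "(c, s) \<in> E"
    | c s where "u = Inr s" "v = Inl c" "(c, s) \<in> E"
    unfolding bip_adj_def by blast
  then show ?case
  proof cases
    case 1
    then show ?thesis using step(3) by auto
  next
    case (2 c s)
    then obtain h cs ss where w: "cs 0 = c0" "alternating_walk E h cs ss" "(cs h, s) \<in> E"
      using step(3) by blast
    have "(cs(Suc h := c)) 0 = c0" "(cs(Suc h := c)) (Suc h) = c"
      "alternating_walk E (Suc h) (cs(Suc h := c)) (ss(Suc h := s))"
      using w 2 alternating_walk_snoc by auto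
    with 2 show ?thesis by blast
  qed
qed

lemma alternating_cycle_exists:
  assumes "connected_bipartite C S E" "c0 \<in> C" "s0 \<in> S" "(c0, s0) \<notin> E"
  shows "\<exists>h cs ss. 1 \<le> h \<and> cs 0 = c0 \<and> ss 0 = s0 \<and> alternating_cycle E h cs ss"
proof -
  have "(Inl c0, Inr s0) \<in> (bip_adj E)\<^sup>*"
    using assms(1-3) unfolding connected_bipartite_def by blast
  from alternating_walk_from_rtrancl[OF this]
  obtain h cs ss where w: "cs 0 = c0" "alternating_walk E h cs ss" "(cs h, s0) \<in> E"
    by blast
  have "h \<noteq> 0" using w assms(4) by (metis gr0I)
  with w have "alternating_cycle E h cs (ss(0 := s0))"
    by (auto simp: alternating_cycle_def alternating_walk_def)
  with w \<open>h \<noteq> 0\<close> show ?thesis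
    by (intro exI[of _ h] exI[of _ cs] exI[of _ "ss(0 := s0)"]) simp
qed

text \<open>The three ways a chord (c^m, s^k) shortens the cycle: skipping forward (k > m + 1),
  closing a sub-cycle backwards (1 \<le> k < m), or returning to s^0 early (k = 0, m < h).\<close>

lemma alternating_cycle_skip_forward:
  assumes cyc: "alternating_cycle E h cs ss" and "Suc m < k" "k \<le> h" "(cs m, ss k) \<in> E"
  defines "d \<equiv> k - Suc m"
  shows "alternating_cycle E (h - d) (\<lambda>i. if i \<le> m then cs i else cs (i + d))
           (\<lambda>i. if i \<le> m then ss i else ss (i + d))"
proof -
  have k: "k = Suc m + d" using assms(2) d_def by simp
  note e = alternating_cycleD[OF cyc]
  show ?thesis
    unfolding alternating_cycle_def alternating_walk_def
  proof (intro conjI allI impI ballI)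
    fix i assume "i < h - d"
    then show "((if i \<le> m then cs i else cs (i + d)),
                (if Suc i \<le> m then ss (Suc i) else ss (Suc i + d))) \<in> E"
      using e(1) assms(3,4) k by (cases "i < m"; cases "i = m") auto
  qed (use e assms(3) k in auto)
qed

lemma alternating_cycle_skip_backward:
  assumes cyc: "alternating_cycle E h cs ss" and "1 \<le> k" "k < m" "m \<le> h" "(cs m, ss k) \<in> E"
  defines "d \<equiv> m - k"
  shows "alternating_cycle E (h - d) (\<lambda>i. if i < k then cs i else cs (i + d))
           (\<lambda>i. if i \<le> k then ss i else ss (i + d))"
proof -
  have m: "m = k + d" using assms(3) d_def by simp
  note e = alternating_cycleD[OF cyc]
  show ?thesis
    unfolding alternating_cycle_def alternating_walk_def
  proof (intro conjI allI impI ballI)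
    fix i assume "i \<in> {1..h - d}"
    then show "((if i < k then cs i else cs (i + d)), (if i \<le> k then ss i else ss (i + d))) \<in> E"
      using e(2) assms(4,5) m by (cases "i = k") auto
  qed (use e assms(2,4) m in auto)
qed

lemma alternating_cycle_truncate:
  assumes "alternating_cycle E h cs ss" "m < h" "(cs m, ss 0) \<in> E"
  shows "alternating_cycle E m cs ss"
  using assms by (auto simp: alternating_cycle_def alternating_walk_def)

lemma shortest_alternating_cycle_chordless:
  assumes cyc: "alternating_cycle E h cs ss" and "cs 0 = c0" "ss 0 = s0"
    and "(c0, s0) \<notin> E"
    and shortest: "\<And>h' cs' ss'. 1 \<le> h' \<Longrightarrow> cs' 0 = c0 \<Longrightarrow> ss' 0 = s0 \<Longrightarrow>
                       alternating_cycle E h' cs' ss' \<Longrightarrow> h \<le> h'"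
  shows "chordless_cycle E h cs ss"
  unfolding chordless_cycle_def
proof (intro allI impI)
  fix m k assume mk: "m \<le> h" "k \<le> h" "(cs m, ss k) \<in> E"
  show "k = Suc m \<or> (k = m \<and> 1 \<le> m) \<or> (k = 0 \<and> m = h)"
  proof (rule ccontr)
    assume "\<not> ?thesis"
    then consider "Suc m < k" | "1 \<le> k \<and> k < m" | "k = 0 \<and> 1 \<le> m \<and> m < h" | "k = 0 \<and> m = 0"
      using mk by linarith
    then show False
    proof cases
      case 1
      then have "1 \<le> h - (k - Suc m)" "h - (k - Suc m) < h" using mk by auto
      with 1 show False
        using shortest[OF _ _ _ alternating_cycle_skip_forward[OF cyc 1 mk(2,3)]] assms(2,3)
        by fastforce
    next
      case 2
      then have "1 \<le> h - (m - k)" "h - (m - k) < h" using mk by auto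
      with 2 show False
        using shortest[OF _ _ _ alternating_cycle_skip_backward[OF cyc _ _ mk(1,3)]] assms(2,3)
        by fastforce
    next
      case 3
      then have "1 \<le> m" "m < h" "(cs m, ss 0) \<in> E" using mk by auto
      then show False
        using shortest[OF _ assms(2,3) alternating_cycle_truncate[OF cyc]] by fastforce
    qed (use mk assms(2-4) in simp)
  qed
qed

lemma shortest_chordless_cycle_exists:
  assumes "connected_bipartite C S E" "c0 \<in> C" "s0 \<in> S" "(c0, s0) \<notin> E"
  obtains h cs ss where "1 \<le> h" "cs 0 = c0" "ss 0 = s0"
    "alternating_cycle E h cs ss" "chordless_cycle E h cs ss"
proof -
  define P where "P h \<longleftrightarrow> (\<exists>cs ss. 1 \<le> h \<and> cs 0 = c0 \<and> ss 0 = s0 \<and> alternating_cycle E h cs ss)"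
    for h
  have "\<exists>h. P h" using alternating_cycle_exists[OF assms] by (simp add: P_def)
  then have "P (Least P)" by (rule LeastI_ex)
  then obtain cs ss where cyc: "1 \<le> Least P" "cs 0 = c0" "ss 0 = s0"
    "alternating_cycle E (Least P) cs ss"
    by (auto simp: P_def)
  have "Least P \<le> h'" if "1 \<le> h'" "cs' 0 = c0" "ss' 0 = s0" "alternating_cycle E h' cs' ss'"
    for h' cs' ss'
    using that by (intro Least_le) (auto simp: P_def)
  with cyc shortest_alternating_cycle_chordless[OF cyc(4,2,3) assms(4)] show ?thesis
    using that by blast
qed

lemma chordless_cycle_inj_customers:
  assumes "alternating_cycle E h cs ss" "chordless_cycle E h cs ss"
  shows "inj_on cs {0..h}"
proof (rule linorder_inj_onI')
  fix m m' assume mm: "m \<in> {0..h}" "m' \<in> {0..h}" "m < m'"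
  show "cs m \<noteq> cs m'"
  proof
    assume eq: "cs m = cs m'"
    show False
    proof (cases "m' < h")
      case True
      with alternating_cycleD(1)[OF assms(1)] eq have "(cs m, ss (Suc m')) \<in> E" by simp
      then show False using chordless_cycleD[OF assms(2), of m "Suc m'"] mm True by auto
    next
      case False
      with alternating_cycleD(3)[OF assms(1)] eq mm have "(cs m, ss 0) \<in> E" by simp
      then show False using chordless_cycleD[OF assms(2), of m 0] mm False by auto
    qed
  qed
qed

text \<open>If s^k = s^{k'} with k < k', the edges into s^{k'} from c^{k'-1} and into s^k from
  c^{k-1} both become chords.\<close>

lemma chordless_cycle_inj_servers:
  assumes "alternating_cycle E h cs ss" "chordless_cycle E h cs ss"
  shows "inj_on ss {0..h}"
proof (rule linorder_inj_onI')
  fix k k' assume kk: "k \<in> {0..h}" "k' \<in> {0..h}" "k < k'"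
  note e = alternating_cycleD(1)[OF assms(1)]
  show "ss k \<noteq> ss k'"
  proof
    assume eq: "ss k = ss k'"
    have "(cs (k' - 1), ss k) \<in> E" using e[of "k' - 1"] eq kk by simp
    moreover have "k' - 1 \<le> h" "k \<le> h" using kk by auto
    ultimately have "k = Suc (k' - 1) \<or> (k = k' - 1 \<and> 1 \<le> k' - 1) \<or> (k = 0 \<and> k' - 1 = h)"
      by (intro chordless_cycleD[OF assms(2)])
    then have k: "k = k' - 1" "1 \<le> k" using kk by auto
    have "(cs (k - 1), ss (Suc (k - 1))) \<in> E" using e kk k by simp
    then have "(cs (k - 1), ss k') \<in> E" using k(2) eq by simp
    moreover have "k - 1 \<le> h" "k' \<le> h" using kk by auto
    ultimately have "k' = Suc (k - 1) \<or> (k' = k - 1 \<and> 1 \<le> k - 1) \<or> (k' = 0 \<and> k - 1 = h)"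
      by (intro chordless_cycleD[OF assms(2)])
    then show False using kk k by auto
  qed
qed

lemma chordless_cycle_length_bound:
  assumes "alternating_cycle E h cs ss" "chordless_cycle E h cs ss"
    and "finite C" "finite S" "E \<subseteq> C \<times> S" "cs 0 \<in> C" "ss 0 \<in> S"
  shows "h \<le> min (card C) (card S) - 1"
proof -
  have "cs i \<in> C \<and> ss i \<in> S" if "i \<le> h" for i
    using that assms(5-7) alternating_cycleD(2)[OF assms(1), of i] by (cases "i = 0") auto
  then have "cs ` {0..h} \<subseteq> C" "ss ` {0..h} \<subseteq> S" by auto
  then have "card (cs ` {0..h}) \<le> card C" "card (ss ` {0..h}) \<le> card S"
    using assms(3,4) by (auto intro: card_mono)
  then show ?thesis
    using card_image[OF chordless_cycle_inj_customers[OF assms(1,2)]]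
      card_image[OF chordless_cycle_inj_servers[OF assms(1,2)]] by simp
qed

lemma cycle_matching_complete_fcfs:
  assumes "alternating_cycle E h cs ss" "chordless_cycle E h cs ss"
  shows "complete_fcfs_matching E (Suc h) cs ss (cycle_matching h)"
proof -
  note chord = chordless_cycleD[OF assms(2)]
  have matched: "\<exists>k. (m, k) \<in> cycle_matching h" if "m < Suc h" for m
    using that by (cases "m = h") (auto simp: cycle_matching_def)
  have fcfs_shift:
    "(\<forall>l<Suc i. (cs i, ss l) \<in> E \<longrightarrow> (\<exists>j<i. (j, l) \<in> cycle_matching h)) \<and>
     (\<forall>j<i. (cs j, ss (Suc i)) \<in> E \<longrightarrow> (\<exists>l<Suc i. (j, l) \<in> cycle_matching h))"
    if "i < h" for i
  proof (intro conjI allI impI)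
    fix l assume "l < Suc i" "(cs i, ss l) \<in> E"
    then have "l = i" "1 \<le> i" using chord[of i l] that by auto
    then show "\<exists>j<i. (j, l) \<in> cycle_matching h"
      using that by (intro exI[of _ "i - 1"]) (auto simp: cycle_matching_def)
  next
    fix j assume "j < i" "(cs j, ss (Suc i)) \<in> E"
    then show "\<exists>l<Suc i. (j, l) \<in> cycle_matching h" using chord[of j "Suc i"] that by auto
  qed
  have fcfs_last: "(cs j, ss 0) \<notin> E" if "j < h" for j
    using chord[of j 0] that by auto
  show ?thesis
    unfolding complete_fcfs_matching_def
  proof (intro conjI)
    show "\<forall>(m, k)\<in>cycle_matching h.
        (\<forall>l<k. (cs m, ss l) \<in> E \<longrightarrow> (\<exists>i<m. (i, l) \<in> cycle_matching h)) \<and>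
        (\<forall>i<m. (cs i, ss k) \<in> E \<longrightarrow> (\<exists>l<k. (i, l) \<in> cycle_matching h))"
      using fcfs_shift fcfs_last by (auto simp: cycle_matching_def)
  qed (use alternating_cycleD(1,3)[OF assms(1)] matched in \<open>auto simp: cycle_matching_def\<close>)
qed

lemma complete_fcfs_matchingD:
  assumes "complete_fcfs_matching E n cs ss A"
  shows "\<And>m k. (m, k) \<in> A \<Longrightarrow> m < n \<and> k < n \<and> (cs m, ss k) \<in> E"
    and "\<And>m m' k. (m, k) \<in> A \<Longrightarrow> (m', k) \<in> A \<Longrightarrow> m = m'"
    and "\<And>m k. m < n \<Longrightarrow> k < n \<Longrightarrow> (cs m, ss k) \<in> E \<Longrightarrow> (\<exists>k'. (m, k') \<in> A) \<or> (\<exists>m'. (m', k) \<in> A)"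
    and "\<And>m k j. (m, k) \<in> A \<Longrightarrow> j < m \<Longrightarrow> (cs j, ss k) \<in> E \<Longrightarrow> \<exists>l<k. (j, l) \<in> A"
proof -
  note M = assms[unfolded complete_fcfs_matching_def]
  show "\<And>m k. (m, k) \<in> A \<Longrightarrow> m < n \<and> k < n \<and> (cs m, ss k) \<in> E"
    using M by auto
  show "\<And>m m' k. (m, k) \<in> A \<Longrightarrow> (m', k) \<in> A \<Longrightarrow> m = m'"
    using M by blast
  show "\<And>m k. m < n \<Longrightarrow> k < n \<Longrightarrow> (cs m, ss k) \<in> E \<Longrightarrow> (\<exists>k'. (m, k') \<in> A) \<or> (\<exists>m'. (m', k) \<in> A)"
    using M by blast
  show "\<And>m k j. (m, k) \<in> A \<Longrightarrow> j < m \<Longrightarrow> (cs j, ss k) \<in> E \<Longrightarrow> \<exists>l<k. (j, l) \<in> A"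
    using M by fast
qed

text \<open>Conversely, every complete FCFS matching contains the cycle matching: matching c^i
  with anything but s^{i+1} would force, by the FCFS conditions, a compatible pair that the
  chordless cycle does not have.\<close>

lemma complete_fcfs_matches_next_server:
  assumes cyc: "alternating_cycle E h cs ss" and "chordless_cycle E h cs ss"
    and A: "complete_fcfs_matching E (Suc h) cs ss A"
    and "i < h" "(i, i) \<notin> A"
  shows "(i, Suc i) \<in> A"
proof -
  note chord = chordless_cycleD[OF assms(2)]
  note edge = complete_fcfs_matchingD(1)[OF A]
  have e: "(cs i, ss (Suc i)) \<in> E" using alternating_cycleD(1)[OF cyc] assms(4) .
  then consider k where "(i, k) \<in> A" | m where "(m, Suc i) \<in> A"
    using complete_fcfs_matchingD(3)[OF A, of i "Suc i"] assms(4) by auto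
  then show ?thesis
  proof cases
    case (1 k)
    then show ?thesis using chord[of i k] edge[OF 1] assms(4,5) by auto
  next
    case (2 m)
    have "m \<noteq> Suc i"
    proof
      assume "m = Suc i"
      then obtain l where "l < Suc i" "(i, l) \<in> A"
        using complete_fcfs_matchingD(4)[OF A 2, of i] e by auto
      then show False using chord[of i l] edge[of i l] assms(4,5) by auto
    qed
    then show ?thesis using chord[of m "Suc i"] edge[OF 2] 2 by auto
  qed
qed

lemma complete_fcfs_contains_cycle_matching:
  assumes cyc: "alternating_cycle E h cs ss" and chordless: "chordless_cycle E h cs ss"
    and A: "complete_fcfs_matching E (Suc h) cs ss A" and "1 \<le> h"
  shows "cycle_matching h \<subseteq> A"
proof -
  note chord = chordless_cycleD[OF chordless]
  note edge = complete_fcfs_matchingD(1)[OF A]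
  note unique = complete_fcfs_matchingD(2)[OF A]
  have next_server: "(i, Suc i) \<in> A" if "i < h" for i
    using that
  proof (induction i)
    case 0
    have "(0, 0) \<notin> A" using edge[of 0 0] chord[of 0 0] 0 by auto
    then show ?case using complete_fcfs_matches_next_server[OF cyc chordless A 0] by simp
  next
    case (Suc i)
    then have "(Suc i, Suc i) \<notin> A" using unique[of i "Suc i" "Suc i"] by auto
    then show ?case using complete_fcfs_matches_next_server[OF cyc chordless A Suc(2)] by simp
  qed
  have no_loop: "(h, h) \<notin> A" using next_server[of "h - 1"] unique[of "h - 1" h h] assms(4) by auto
  consider k where "(h, k) \<in> A" | m where "(m, 0) \<in> A"
    using complete_fcfs_matchingD(3)[OF A, of h 0] alternating_cycleD(3)[OF cyc] by auto
  then have "(h, 0) \<in> A"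
  proof cases
    case (1 k)
    then show ?thesis using edge[OF 1] chord[of h k] no_loop by auto
  next
    case (2 m)
    then show ?thesis using edge[OF 2] chord[of m 0] by auto
  qed
  with next_server show ?thesis by (auto simp: cycle_matching_def)
qed

lemma perfect_matching_cycle_matching:
  assumes "cycle_matching h \<subseteq> A"
  shows "perfect_matching (Suc h) A"
proof -
  have shift: "(i, Suc i) \<in> A" if "i < h" for i
    using assms that by (auto simp: cycle_matching_def)
  have last: "(h, 0) \<in> A" using assms by (simp add: cycle_matching_def)
  show ?thesis
    unfolding perfect_matching_def
  proof (intro conjI allI impI)
    fix m assume "m < Suc h"
    then show "\<exists>k. (m, k) \<in> A" using shift last by (auto simp: less_Suc_eq)
  next
    fix k assume "k < Suc h"
    then show "\<exists>m. (m, k) \<in> A" using shift last by (cases k) auto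
  qed
qed

lemma chordless_cycle_fcfs_perfect:
  assumes "alternating_cycle E h cs ss" "chordless_cycle E h cs ss" "1 \<le> h"
  shows "fcfs_perfect E (Suc h) cs ss"
  unfolding fcfs_perfect_def
  using cycle_matching_complete_fcfs[OF assms(1,2)]
    perfect_matching_cycle_matching[OF complete_fcfs_contains_cycle_matching[OF assms(1,2) _ assms(3)]]
  by blast

theorem lemma3p3:
  fixes C :: "'c set" and S :: "'s set" and E :: "('c \<times> 's) set"
    and c0 :: 'c and s0 :: 's
  assumes "finite C" and "finite S"
    and "connected_bipartite C S E"
    and "c0 \<in> C" and "s0 \<in> S" and "(c0, s0) \<notin> E"
  shows "\<exists>h::nat. \<exists>cs :: nat \<Rightarrow> 'c. \<exists>ss :: nat \<Rightarrow> 's.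
           1 \<le> h \<and> h \<le> min (card C) (card S) - 1 \<and>
           cs 0 = c0 \<and> ss 0 = s0 \<and>
           (\<forall>i \<in> {1..h}. cs i \<in> C \<and> ss i \<in> S \<and> (cs i, ss i) \<in> E) \<and>
           fcfs_perfect E (Suc h) cs ss"
proof -
  have EC: "E \<subseteq> C \<times> S" using assms(3) by (simp add: connected_bipartite_def)
  obtain h cs ss where h: "1 \<le> h" "cs 0 = c0" "ss 0 = s0"
    and cyc: "alternating_cycle E h cs ss" and chordless: "chordless_cycle E h cs ss"
    using shortest_chordless_cycle_exists[OF assms(3-6)] .
  have "h \<le> min (card C) (card S) - 1"
    using chordless_cycle_length_bound[OF cyc chordless assms(1,2) EC] h assms(4,5) by simp
  moreover have "\<forall>i \<in> {1..h}. cs i \<in> C \<and> ss i \<in> S \<and> (cs i, ss i) \<in> E"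
    using alternating_cycleD(2)[OF cyc] EC by (meson SigmaD1 SigmaD2 atLeastAtMost_iff subsetD)
  moreover have "fcfs_perfect E (Suc h) cs ss"
    using chordless_cycle_fcfs_perfect[OF cyc chordless h(1)] .
  ultimately show ?thesis using h by blast
qed

end
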